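(* Let $\mathcal{S}_1$ be the set of integer strings obtainable from $[4]$ by iterating the operations $$[c_1,\dots,c_k]\mapsto[c_1+1,\dots,c_k,2]\quad\text{or}\quad[c_1,\dots,c_k]\mapsto[2,c_1,\dots,c_k+1].$$ Let $\mathcal{S}_2$ be the set of strings obtainable from $[4]=[2+2]$ by iterating the operations $$[a_1,\dots,a_{k-1},a_k+b_l,b_{l-1},\dots,b_1]\mapsto[a_1,\dots,a_{k-1},(a_k+1)+2,b_l,b_{l-1},\dots,b_1]$$ or $$[a_1,\dots,a_{k-1},a_k+b_l,b_{l-1},\dots,b_1]\mapsto[a_1,\dots,a_{k-1},a_k,2+(b_l+1),b_{l-1},\dots,b_1].$$ Then $\mathcal{S}_1=\mathcal{S}_2$, and this set equals the set of Hirzebruch–Jung continued fraction expansions (with all entries $\ge2$) of the rationals $$\left\{\frac{p^2}{pq-1}\,:\,p>q>0,\ \gcd(p,q)=1\right\}.$$ Similarly, the set of Hirzebruch–Jung continued fraction expansions of $$\left\{\frac{p^2}{pq+1}\,:\,p>q>0,\ \gcd(p,q)=1\right\}$$ is obtained from $[2,2,2]$ in either of two ways. The first is by iterating $$[c_1,\dots,c_k]\mapsto[c_1+1,\dots,c_k,2]\quad\text{or}\quad[2,c_1,\dots,c_k+1].$$ The second is by iterating $$[a_1,\dots,a_{k-1},a_k,2,b_l,b_{l-1},\dots,b_1]\mapsto[a_1,\dots,a_{k-1},(a_k+1),2,2,b_l,b_{l-1},\dots,b_1]$$ or $$[a_1,\dots,a_{k-1},a_k,2,b_l,b_{l-1}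,\dots,b_1]\mapsto[a_1,\dots,a_{k-1},a_k,2,2,(b_l+1),b_{l-1},\dots,b_1].$$
   Context: Hirzebruch–Jung continued fractions: $[c_1,\dots,c_n]:=c_1-\cfrac{1}{c_2-\cfrac{1}{\ddots-\cfrac{1}{c_n}}}$, with all $c_i\ge2$ (the expansion of a rational $>1$ is then unique). In the rules for $\mathcal{S}_2$, a string is written as $[a_1,\dots,a_{k-1},a_k+b_l,b_{l-1},\dots,b_1]$. Here $p/q=[a_1,\dots,a_k]$ and $p/(p-q)=[b_1,\dots,b_l]$ for the corresponding coprime pair $p>q$, so that a distinguished middle entry equals $a_k+b_l$. The rules act on this decomposition, keeping track of $a_k$ and $b_l$ separately. The same applies to the decomposition $[a_1,\dots,a_k,2,b_l,\dots,b_1]$ in the second part. *)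

theory Defs
  imports Complex_Main
begin

text \<open>Hirzebruch--Jung continued fraction
  [c1,...,cn] = c1 - 1/(c2 - 1/( ... - 1/cn)), evaluated in the rationals.
  The value of the empty list is irrelevant (only nonempty strings are used).\<close>
fun hj :: "int list \<Rightarrow> rat" where
  "hj [] = 0"
| "hj [c] = of_int c"
| "hj (c # d # cs) = of_int c - 1 / hj (d # cs)"

definition is_hj_expansion :: "int list \<Rightarrow> rat \<Rightarrow> bool" where
  "is_hj_expansion c r \<longleftrightarrow> c \<noteq> [] \<and> (\<forall>x\<in>set c. x \<ge> 2) \<and> hj c = r"

definition incr_last :: "int list \<Rightarrow> int list" where
  "incr_last xs = butlast xs @ [last xs + 1]"

inductive_set gen_strings :: "int list \<Rightarrow> int list set" for s :: "int list" where
  base: "s \<in> gen_strings s"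
| left: "c \<in> gen_strings s \<Longrightarrow> (hd c + 1) # tl c @ [2] \<in> gen_strings s"
| right: "c \<in> gen_strings s \<Longrightarrow> 2 # incr_last c \<in> gen_strings s"

abbreviation S1 :: "int list set" where "S1 \<equiv> gen_strings [4]"
abbreviation T1 :: "int list set" where "T1 \<equiv> gen_strings [2,2,2]"

inductive_set dual_pairs :: "(int list \<times> int list) set" where
  base: "([2], [2]) \<in> dual_pairs"
| stepA: "(a, b) \<in> dual_pairs \<Longrightarrow> (incr_last a, b @ [2]) \<in> dual_pairs"
| stepB: "(a, b) \<in> dual_pairs \<Longrightarrow> (a @ [2], incr_last b) \<in> dual_pairs"

definition glue_mid :: "int list \<Rightarrow> int list \<Rightarrow> int list" where
  "glue_mid a b = butlast a @ [last a + last b] @ rev (butlast b)"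

definition glue_two :: "int list \<Rightarrow> int list \<Rightarrow> int list" where
  "glue_two a b = a @ [2] @ rev b"

definition S2 :: "int list set" where
  "S2 = (\<lambda>(a, b). glue_mid a b) ` dual_pairs"

definition T2 :: "int list set" where
  "T2 = (\<lambda>(a, b). glue_two a b) ` dual_pairs"

definition HJ_minus :: "int list set" where
  "HJ_minus = {c. \<exists>p q :: int. p > q \<and> q > 0 \<and> coprime p q \<and>
      is_hj_expansion c (of_int (p^2) / of_int (p * q - 1))}"

definition HJ_plus :: "int list set" where
  "HJ_plus = {c. \<exists>p q :: int. p > q \<and> q > 0 \<and> coprime p q \<and>
      is_hj_expansion c (of_int (p^2) / of_int (p * q + 1))}"

end

theory Submission
  imports Defs
begin

text \<open>The pairs in \<open>dual_pairs\<close> are exactly the pairs of Hirzebruch--Jung expansions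
  of \<open>p/q\<close> and \<open>p/(p-q)\<close> (Riemenschneider duality), and they can be grown at the front just as
  well as at the back; growing at the front is what the operations defining \<open>S1\<close> and \<open>T1\<close>
  do to the glued strings.  For the values, the string \<open>[c1,...,cn]\<close> is encoded by the
  product of the matrices \<open>[[ci,-1],[1,0]]\<close>, whose first column \<open>(p,q)\<close> gives
  \<open>[c1,...,cn] = p/q\<close>; the matrix of the dual string has first column \<open>(p,p-q)\<close>, and multiplying out the
  glued strings (using determinant \<open>1\<close>) gives first columns \<open>(p\<^sup>2, pq \<mp> 1)\<close>.  Uniqueness
  of expansions and the existence of every coprime \<open>p > q > 0\<close> finish the argument.\<close>

abbreviation incr_hd :: "int list \<Rightarrow> int list" where
  "incr_hd xs \<equiv> (hd xs + 1) # tl xs"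

subsection \<open>Dual pairs grow at both ends\<close>

lemma dual_pairs_nonempty: "(a, b) \<in> dual_pairs \<Longrightarrow> a \<noteq> [] \<and> b \<noteq> []"
  by (induction rule: dual_pairs.induct) (auto simp: incr_last_def)

lemma dual_pairs_swap: "(a, b) \<in> dual_pairs \<Longrightarrow> (b, a) \<in> dual_pairs"
  by (induction rule: dual_pairs.induct) (auto intro: dual_pairs.intros)

lemma incr_last_incr_hd: "a \<noteq> [] \<Longrightarrow> incr_last (incr_hd a) = incr_hd (incr_last a)"
  by (cases a) (auto simp: incr_last_def)

lemma incr_hd_append: "a \<noteq> [] \<Longrightarrow> incr_hd a @ [2] = incr_hd (a @ [2])"
  by (cases a) auto

lemma incr_last_Cons: "b \<noteq> [] \<Longrightarrow> incr_last (x # b) = x # incr_last b"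
  by (cases b) (auto simp: incr_last_def)

lemma dual_pairs_incr_hd_left: "(a, b) \<in> dual_pairs \<Longrightarrow> (incr_hd a, 2 # b) \<in> dual_pairs"
proof (induction rule: dual_pairs.induct)
  case base
  show ?case using dual_pairs.stepA[OF dual_pairs.base] by (simp add: incr_last_def)
next
  case (stepA a b)
  then show ?case
    using dual_pairs.stepA[OF stepA.IH] dual_pairs_nonempty[OF stepA.hyps]
    by (simp add: incr_last_incr_hd)
next
  case (stepB a b)
  then show ?case
    using dual_pairs.stepB[OF stepB.IH] dual_pairs_nonempty[OF stepB.hyps]
    by (simp add: incr_hd_append incr_last_Cons)
qed

lemma dual_pairs_incr_hd_right: "(a, b) \<in> dual_pairs \<Longrightarrow> (2 # a, incr_hd b) \<in> dual_pairs"
  using dual_pairs_swap dual_pairs_incr_hd_left by blast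

lemma incr_last_ge_2:
  assumes "a \<noteq> []" "\<forall>x\<in>set a. x \<ge> 2"
  shows "\<forall>x\<in>set (incr_last a). x \<ge> (2::int)"
proof -
  have "last a \<ge> 2" using assms by simp
  then show ?thesis using assms(2) by (auto simp: incr_last_def dest: in_set_butlastD)
qed

lemma dual_pairs_ge_2: "(a, b) \<in> dual_pairs \<Longrightarrow> (\<forall>x\<in>set a. x \<ge> 2) \<and> (\<forall>x\<in>set b. x \<ge> 2)"
  by (induction rule: dual_pairs.induct) (auto dest: dual_pairs_nonempty incr_last_ge_2)

inductive_set front_pairs :: "(int list \<times> int list) set" where
  base: "([2], [2]) \<in> front_pairs"
| left: "(a, b) \<in> front_pairs \<Longrightarrow> (incr_hd a, 2 # b) \<in> front_pairs"
| right: "(a, b) \<in> front_pairs \<Longrightarrow> (2 # a, incr_hd b) \<in> front_pairs"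

lemma front_pairs_dual_pairs: "(a, b) \<in> front_pairs \<Longrightarrow> (a, b) \<in> dual_pairs"
  by (induction rule: front_pairs.induct)
    (auto intro: dual_pairs.base dual_pairs_incr_hd_left dual_pairs_incr_hd_right)

lemma front_pairs_back_steps:
  "(a, b) \<in> front_pairs \<Longrightarrow>
    (incr_last a, b @ [2]) \<in> front_pairs \<and> (a @ [2], incr_last b) \<in> front_pairs"
proof (induction rule: front_pairs.induct)
  case base
  show ?case
    using front_pairs.left[OF front_pairs.base] front_pairs.right[OF front_pairs.base]
    by (simp add: incr_last_def)
next
  case (left a b)
  have "a \<noteq> []" "b \<noteq> []"
    using left.hyps front_pairs_dual_pairs dual_pairs_nonempty by blast+
  then show ?case
    using front_pairs.left[OF conjunct1[OF left.IH]] front_pairs.left[OF conjunct2[OF left.IH]]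
    by (simp add: incr_last_incr_hd incr_last_Cons)
next
  case (right a b)
  have "a \<noteq> []" "b \<noteq> []"
    using right.hyps front_pairs_dual_pairs dual_pairs_nonempty by blast+
  then show ?case
    using front_pairs.right[OF conjunct1[OF right.IH]] front_pairs.right[OF conjunct2[OF right.IH]]
    by (simp add: incr_last_incr_hd incr_last_Cons)
qed

lemma dual_pairs_front_pairs: "(a, b) \<in> dual_pairs \<Longrightarrow> (a, b) \<in> front_pairs"
  by (induction rule: dual_pairs.induct) (auto intro: front_pairs.base dest: front_pairs_back_steps)

context
  fixes g :: "int list \<Rightarrow> int list \<Rightarrow> int list" and s :: "int list"
  assumes seed: "g [2] [2] = s"
    and grow_left: "\<And>a b. a \<noteq> [] \<Longrightarrow> b \<noteq> [] \<Longrightarrow>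
      g (incr_hd a) (2 # b) = (hd (g a b) + 1) # tl (g a b) @ [2]"
    and grow_right: "\<And>a b. a \<noteq> [] \<Longrightarrow> b \<noteq> [] \<Longrightarrow>
      g (2 # a) (incr_hd b) = 2 # incr_last (g a b)"
begin

lemma gen_strings_subset_image_dual_pairs: "c \<in> gen_strings s \<Longrightarrow> c \<in> (\<lambda>(a, b). g a b) ` dual_pairs"
proof (induction rule: gen_strings.induct)
  case base
  show ?case using seed dual_pairs.base by force
next
  case (left c)
  then obtain a b where ab: "(a, b) \<in> dual_pairs" and c: "c = g a b" by auto
  have "(hd c + 1) # tl c @ [2] = g (incr_hd a) (2 # b)"
    using c grow_left dual_pairs_nonempty[OF ab] by simp
  then show ?case using dual_pairs_incr_hd_left[OF ab] by force
next
  case (right c)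
  then obtain a b where ab: "(a, b) \<in> dual_pairs" and c: "c = g a b" by auto
  have "2 # incr_last c = g (2 # a) (incr_hd b)"
    using c grow_right dual_pairs_nonempty[OF ab] by simp
  then show ?case using dual_pairs_incr_hd_right[OF ab] by force
qed

lemma front_pairs_glue_in_gen_strings: "(a, b) \<in> front_pairs \<Longrightarrow> g a b \<in> gen_strings s"
proof (induction rule: front_pairs.induct)
  case base
  show ?case using seed gen_strings.base by simp
next
  case (left a b)
  then have "a \<noteq> []" "b \<noteq> []" using front_pairs_dual_pairs dual_pairs_nonempty by blast+
  then show ?case using gen_strings.left[OF left.IH] grow_left by simp
next
  case (right a b)
  then have "a \<noteq> []" "b \<noteq> []" using front_pairs_dual_pairs dual_pairs_nonempty by blast+
  then show ?case using gen_strings.right[OF right.IH] grow_right by simp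
qed

lemma gen_strings_eq_image_dual_pairs: "gen_strings s = (\<lambda>(a, b). g a b) ` dual_pairs"
  using gen_strings_subset_image_dual_pairs front_pairs_glue_in_gen_strings dual_pairs_front_pairs
  by auto

end

lemma glue_mid_incr_hd_left:
  "a \<noteq> [] \<Longrightarrow> b \<noteq> [] \<Longrightarrow>
    glue_mid (incr_hd a) (2 # b) = (hd (glue_mid a b) + 1) # tl (glue_mid a b) @ [2]"
  by (cases a rule: list.exhaust; cases "tl a") (auto simp: glue_mid_def)

lemma glue_mid_incr_hd_right:
  "a \<noteq> [] \<Longrightarrow> b \<noteq> [] \<Longrightarrow> glue_mid (2 # a) (incr_hd b) = 2 # incr_last (glue_mid a b)"
  by (cases b rule: list.exhaust; cases "tl b") (auto simp: glue_mid_def incr_last_def butlast_append)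

lemma glue_two_incr_hd_left:
  "a \<noteq> [] \<Longrightarrow>
    glue_two (incr_hd a) (2 # b) = (hd (glue_two a b) + 1) # tl (glue_two a b) @ [2]"
  by (cases a) (auto simp: glue_two_def)

lemma glue_two_incr_hd_right:
  "b \<noteq> [] \<Longrightarrow> glue_two (2 # a) (incr_hd b) = 2 # incr_last (glue_two a b)"
  by (cases b) (auto simp: glue_two_def incr_last_def butlast_append)

lemma S1_eq_S2: "S1 = S2"
  unfolding S2_def
proof (rule gen_strings_eq_image_dual_pairs)
  show "glue_mid [2] [2] = [4]" by (simp add: glue_mid_def)
qed (simp_all add: glue_mid_incr_hd_left glue_mid_incr_hd_right)

lemma T1_eq_T2: "T1 = T2"
  unfolding T2_def
proof (rule gen_strings_eq_image_dual_pairs)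
  show "glue_two [2] [2] = [2, 2, 2]" by (simp add: glue_two_def)
qed (simp_all add: glue_two_incr_hd_left glue_two_incr_hd_right)

subsection \<open>Continuant matrices\<close>

datatype mat2 = Mat2 (m11: int) (m12: int) (m21: int) (m22: int)

instantiation mat2 :: monoid_mult
begin

fun times_mat2 :: "mat2 \<Rightarrow> mat2 \<Rightarrow> mat2" where
  "times_mat2 (Mat2 a b c d) (Mat2 e f g h) = Mat2 (a*e + b*g) (a*f + b*h) (c*e + d*g) (c*f + d*h)"

definition one_mat2 :: mat2 where
  "one_mat2 = Mat2 1 0 0 1"

instance
proof
  fix A B C :: mat2
  show "A * B * C = A * (B * C)"
    by (cases A; cases B; cases C) (simp add: algebra_simps)
  show "1 * A = A" "A * 1 = A"
    by (cases A; simp add: one_mat2_def)+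
qed

end

fun mat2_det :: "mat2 \<Rightarrow> int" where
  "mat2_det (Mat2 a b c d) = a*d - b*c"

text \<open>\<open>mat2_flip A = D A\<^sup>T D\<close> with \<open>D = diag(1,-1)\<close>.\<close>
fun mat2_flip :: "mat2 \<Rightarrow> mat2" where
  "mat2_flip (Mat2 a b c d) = Mat2 a (-c) (-b) d"

definition hj_step :: "int \<Rightarrow> mat2" where
  "hj_step x = Mat2 x (-1) 1 0"

definition hj_mat :: "int list \<Rightarrow> mat2" where
  "hj_mat c = prod_list (map hj_step c)"

lemma hj_mat_simps [simp]:
  "hj_mat [] = 1" "hj_mat (x # c) = hj_step x * hj_mat c" "hj_mat (c @ d) = hj_mat c * hj_mat d"
  by (simp_all add: hj_mat_def)

lemma mat2_det_mult: "mat2_det (A * B) = mat2_det A * mat2_det B"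
  by (cases A; cases B) (simp add: algebra_simps)

lemma mat2_det_hj_mat: "mat2_det (hj_mat c) = 1"
  by (induction c) (simp_all add: mat2_det_mult hj_step_def one_mat2_def)

lemma mat2_flip_mult: "mat2_flip (A * B) = mat2_flip B * mat2_flip A"
  by (cases A; cases B) (simp add: algebra_simps)

lemma mat2_flip_hj_step: "mat2_flip (hj_step x) = hj_step x"
  by (simp add: hj_step_def)

lemma hj_mat_rev: "hj_mat (rev c) = mat2_flip (hj_mat c)"
  by (induction c) (simp add: one_mat2_def, simp add: mat2_flip_mult mat2_flip_hj_step)

lemma hj_mat_snoc: "c \<noteq> [] \<Longrightarrow> hj_mat c = hj_mat (butlast c) * hj_step (last c)"
  by (metis append_butlast_last_id hj_mat_simps(1-3) mult.right_neutral)

lemma hj_mat_incr_last: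
  assumes "a \<noteq> []"
  shows "hj_mat (incr_last a) = hj_mat a * Mat2 1 0 (-1) 1"
proof -
  have "hj_step (last a + 1) = hj_step (last a) * Mat2 1 0 (-1) 1"
    by (simp add: hj_step_def)
  then show ?thesis
    using assms by (simp add: hj_mat_snoc[of a] incr_last_def mult.assoc)
qed

text \<open>If \<open>A\<close> has first column \<open>(p,q)\<close>, then \<open>mat2_dual A\<close> has first column \<open>(p,p-q)\<close>.\<close>
fun mat2_dual :: "mat2 \<Rightarrow> mat2" where
  "mat2_dual (Mat2 a b c d) = Mat2 a (-(a+b)) (a-c) (-(a-c+b-d))"

lemma mat2_dual_mult_incr: "mat2_dual (A * Mat2 1 0 (-1) 1) = mat2_dual A * hj_step 2"
  by (cases A) (simp add: hj_step_def algebra_simps)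

lemma mat2_dual_mult_hj_step_2: "mat2_dual (A * hj_step 2) = mat2_dual A * Mat2 1 0 (-1) 1"
  by (cases A) (simp add: hj_step_def algebra_simps)

lemma hj_mat_dual_pairs: "(a, b) \<in> dual_pairs \<Longrightarrow> hj_mat b = mat2_dual (hj_mat a)"
proof (induction rule: dual_pairs.induct)
  case base
  show ?case by (simp add: hj_step_def one_mat2_def)
next
  case (stepA a b)
  then show ?case
    using dual_pairs_nonempty by (simp add: hj_mat_incr_last mat2_dual_mult_incr)
next
  case (stepB a b)
  then show ?case
    using dual_pairs_nonempty by (simp add: hj_mat_incr_last mat2_dual_mult_hj_step_2)
qed

lemma hj_step_add: "hj_step (x + y) = hj_step x * Mat2 0 1 (-1) 0 * hj_step y"
  by (simp add: hj_step_def)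

lemma hj_mat_glue_mid:
  assumes "a \<noteq> []" "b \<noteq> []"
  shows "hj_mat (glue_mid a b) = hj_mat a * Mat2 0 1 (-1) 0 * mat2_flip (hj_mat b)"
proof -
  have "mat2_flip (hj_mat b) = hj_step (last b) * hj_mat (rev (butlast b))"
    using assms(2) by (simp add: hj_mat_snoc[of b] mat2_flip_mult mat2_flip_hj_step flip: hj_mat_rev)
  then show ?thesis
    using assms(1) by (simp add: glue_mid_def hj_step_add hj_mat_snoc[of a] mult.assoc)
qed

lemma hj_mat_glue_two: "hj_mat (glue_two a b) = hj_mat a * hj_step 2 * mat2_flip (hj_mat b)"
  by (simp add: glue_two_def hj_mat_rev mult.assoc)

lemma glue_first_columns:
  assumes "mat2_det A = 1"
  shows "m11 (A * Mat2 0 1 (-1) 0 * mat2_flip (mat2_dual A)) = m11 A ^ 2"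
    and "m21 (A * Mat2 0 1 (-1) 0 * mat2_flip (mat2_dual A)) = m11 A * m21 A - 1"
    and "m11 (A * hj_step 2 * mat2_flip (mat2_dual A)) = m11 A ^ 2"
    and "m21 (A * hj_step 2 * mat2_flip (mat2_dual A)) = m11 A * m21 A + 1"
  using assms by (cases A; simp add: hj_step_def algebra_simps power2_eq_square)+

subsection \<open>Values of continued fractions\<close>

lemma hj_mat_first_column:
  assumes "\<forall>x\<in>set c. x \<ge> 2"
  shows "0 \<le> m21 (hj_mat c) \<and> m21 (hj_mat c) < m11 (hj_mat c) \<and>
    (c \<noteq> [] \<longrightarrow> 0 < m21 (hj_mat c) \<and> hj c = of_int (m11 (hj_mat c)) / of_int (m21 (hj_mat c)))"
  using assms
proof (induction c)
  case Nil
  show ?case by (simp add: one_mat2_def)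
next
  case (Cons x cs)
  obtain p r q s where m: "hj_mat cs = Mat2 p r q s" by (cases "hj_mat cs")
  with Cons have IH: "0 \<le> q" "q < p" "cs \<noteq> [] \<Longrightarrow> hj cs = of_int p / of_int q \<and> 0 < q"
    by auto
  have "x \<ge> 2" using Cons.prems by simp
  then have "2 * p \<le> x * p" using IH by (simp add: mult_right_mono)
  then have "p < x * p - q" using IH by linarith
  moreover have "hj (x # cs) = of_int (x * p - q) / of_int p"
  proof (cases cs)
    case Nil
    then show ?thesis using m by (simp add: one_mat2_def)
  next
    case (Cons y ys)
    then have "hj (x # cs) = of_int x - 1 / hj cs" by simp
    also have "\<dots> = of_int x - of_int q / of_int p" using IH Cons by simp
    also have "\<dots> = of_int (x * p - q) / of_int p" using IH by (simp add: field_simps)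
    finally show ?thesis .
  qed
  ultimately show ?case using m IH by (simp add: hj_step_def)
qed

lemma hj_Cons_ceiling:
  assumes "\<forall>y\<in>set (x # cs). y \<ge> 2"
  shows "\<lceil>hj (x # cs)\<rceil> = x" and "hj (x # cs) = of_int x \<longleftrightarrow> cs = []"
proof -
  have "of_int x - 1 < hj (x # cs) \<and> hj (x # cs) < of_int x" if ne: "cs \<noteq> []"
  proof -
    have "1 < hj cs"
      using hj_mat_first_column[of cs] assms ne by simp
    moreover obtain y ys where "cs = y # ys" using ne by (cases cs) auto
    ultimately show ?thesis by (simp add: field_simps)
  qed
  then show "\<lceil>hj (x # cs)\<rceil> = x" and "hj (x # cs) = of_int x \<longleftrightarrow> cs = []"
    by (cases "cs = []"; simp add: ceiling_eq_iff)+
qed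

lemma hj_inj:
  assumes "c \<noteq> []" "\<forall>x\<in>set c. x \<ge> 2" "d \<noteq> []" "\<forall>x\<in>set d. x \<ge> 2" "hj c = hj d"
  shows "c = d"
  using assms
proof (induction c arbitrary: d)
  case Nil
  then show ?case by simp
next
  case (Cons x cs)
  obtain y ds where d: "d = y # ds" using Cons.prems(3) by (cases d) auto
  have "x = y"
    using hj_Cons_ceiling(1)[of x cs] hj_Cons_ceiling(1)[of y ds] Cons.prems d by simp
  moreover have "cs = [] \<longleftrightarrow> ds = []"
    using hj_Cons_ceiling(2)[of x cs] hj_Cons_ceiling(2)[of y ds] Cons.prems d \<open>x = y\<close> by simp
  moreover have "cs = ds" if ne: "cs \<noteq> []" "ds \<noteq> []"
  proof -
    obtain z zs w ws where "cs = z # zs" "ds = w # ws"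
      using ne by (cases cs; cases ds) auto
    then have "hj cs = hj ds" using Cons.prems(5) d \<open>x = y\<close> by simp
    then show ?thesis using Cons.IH[of ds] Cons.prems d ne by simp
  qed
  ultimately show ?case using d by auto
qed

lemma coprime_first_column:
  assumes "mat2_det A = 1"
  shows "coprime (m11 A) (m21 A)"
proof (rule coprimeI)
  fix d assume "d dvd m11 A" "d dvd m21 A"
  then have "d dvd m11 A * m22 A - m12 A * m21 A" by simp
  then show "is_unit d" using assms by (cases A) simp
qed

text \<open>Euclid's algorithm with rounding up: \<open>p/q = x - r/q\<close> with \<open>x = \<lfloor>p/q\<rfloor> + 1\<close>.\<close>
lemma ex_hj_mat_first_column:
  fixes p q :: int
  shows "0 < q \<Longrightarrow> q < p \<Longrightarrow> coprime p q \<Longrightarrow>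
    \<exists>c. c \<noteq> [] \<and> (\<forall>x\<in>set c. x \<ge> 2) \<and> m11 (hj_mat c) = p \<and> m21 (hj_mat c) = q"
proof (induction "nat p" arbitrary: p q rule: less_induct)
  case less
  show ?case
  proof (cases "q = 1")
    case True
    then show ?thesis using less.prems by (intro exI[of _ "[p]"]) (simp add: hj_step_def one_mat2_def)
  next
    case False
    have "\<not> q dvd p"
      using False less.prems by (auto simp: coprime_absorb_right zdvd1_eq)
    define x where "x = p div q + 1"
    define r where "r = x * q - p"
    have r: "r = q - p mod q"
      unfolding r_def x_def using div_mult_mod_eq[of p q] by (simp add: algebra_simps)
    have "0 \<le> p mod q" "p mod q < q" "p mod q \<noteq> 0"
      using \<open>\<not> q dvd p\<close> less.prems(1) by auto
    then have "0 < r" "r < q" using r by auto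
    have "x \<ge> 2"
      using less.prems(1,2) pos_imp_zdiv_pos_iff[of q p] by (simp add: x_def)
    have "coprime q r"
    proof (rule coprimeI)
      fix d assume "d dvd q" "d dvd r"
      then have "d dvd x * q - r" by simp
      then have "d dvd p" by (simp add: r_def)
      with \<open>d dvd q\<close> show "is_unit d" using less.prems(3) by (meson coprime_common_divisor)
    qed
    moreover have "nat q < nat p" using less.prems by simp
    ultimately obtain cs
      where cs: "cs \<noteq> []" "\<forall>x\<in>set cs. x \<ge> 2" "m11 (hj_mat cs) = q" "m21 (hj_mat cs) = r"
      using less.hyps[of q r] \<open>0 < r\<close> \<open>r < q\<close> by blast
    show ?thesis
    proof (intro exI[of _ "x # cs"] conjI)
      show "m11 (hj_mat (x # cs)) = p" "m21 (hj_mat (x # cs)) = q"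
        using cs by (cases "hj_mat cs"; simp add: hj_step_def r_def)+
    qed (use cs \<open>x \<ge> 2\<close> in auto)
  qed
qed

lemma ex_dual_partner:
  "a \<noteq> [] \<Longrightarrow> \<forall>x\<in>set a. x \<ge> 2 \<Longrightarrow> \<exists>b. (a, b) \<in> dual_pairs"
proof (induction "nat (sum_list a)" arbitrary: a rule: less_induct)
  case less
  have a: "a = butlast a @ [last a]" and "last a \<ge> 2"
    using less.prems by auto
  have ge2: "\<forall>x\<in>set (butlast a). x \<ge> 2"
    using less.prems(2) by (auto dest: in_set_butlastD)
  then have "sum_list (butlast a) \<ge> 0"
    by (intro sum_list_nonneg) auto
  then have sum: "sum_list a = sum_list (butlast a) + last a"
    by (subst a) simp
  consider (incr) "last a \<ge> 3" | (two) "last a = 2"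
    using \<open>last a \<ge> 2\<close> by linarith
  then show ?case
  proof cases
    case incr
    define a' where "a' = butlast a @ [last a - 1]"
    have "nat (sum_list a') < nat (sum_list a)"
      using sum \<open>sum_list (butlast a) \<ge> 0\<close> incr by (simp add: a'_def)
    moreover have "\<forall>x\<in>set a'. x \<ge> 2" using ge2 incr by (auto simp: a'_def)
    ultimately obtain b' where "(a', b') \<in> dual_pairs" using less.hyps[of a'] by (auto simp: a'_def)
    moreover have "incr_last a' = a" using a by (simp add: a'_def incr_last_def)
    ultimately show ?thesis using dual_pairs.stepA by metis
  next
    case two
    show ?thesis
    proof (cases "butlast a = []")
      case True
      then have "a = [2]" using a two by (metis append_Nil)
      then show ?thesis using dual_pairs.base by blast
    next
      case False
      have "nat (sum_list (butlast a)) < nat (sum_list a)"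
        using sum \<open>sum_list (butlast a) \<ge> 0\<close> two by simp
      then obtain b' where "(butlast a, b') \<in> dual_pairs" using less.hyps False ge2 by blast
      then show ?thesis using dual_pairs.stepB a two by metis
    qed
  qed
qed

subsection \<open>Glued strings as expansions\<close>

lemma is_hj_expansion_first_column:
  assumes "c \<noteq> []" "\<forall>x\<in>set c. x \<ge> 2" "m11 (hj_mat c) = p" "m21 (hj_mat c) = q"
  shows "is_hj_expansion c (of_int p / of_int q)"
  using assms hj_mat_first_column[of c] by (simp add: is_hj_expansion_def)

lemma dual_pairs_first_column:
  assumes "(a, b) \<in> dual_pairs"
  shows "m21 (hj_mat a) < m11 (hj_mat a)" "0 < m21 (hj_mat a)" "coprime (m11 (hj_mat a)) (m21 (hj_mat a))"
  using hj_mat_first_column[of a] dual_pairs_ge_2[OF assms] dual_pairs_nonempty[OF assms]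
    coprime_first_column[OF mat2_det_hj_mat] by simp_all

lemma glue_mid_expansion:
  assumes "(a, b) \<in> dual_pairs"
  shows "is_hj_expansion (glue_mid a b)
    (of_int (m11 (hj_mat a) ^ 2) / of_int (m11 (hj_mat a) * m21 (hj_mat a) - 1))"
proof (rule is_hj_expansion_first_column)
  have ne: "a \<noteq> []" "b \<noteq> []" and ge2: "\<forall>x\<in>set a. x \<ge> 2" "\<forall>x\<in>set b. x \<ge> 2"
    using dual_pairs_nonempty[OF assms] dual_pairs_ge_2[OF assms] by auto
  have "last a \<ge> 2" "last b \<ge> 2" using ne ge2 by auto
  then show "\<forall>x\<in>set (glue_mid a b). x \<ge> 2"
    using ge2 by (auto simp: glue_mid_def dest: in_set_butlastD)
  show "m11 (hj_mat (glue_mid a b)) = m11 (hj_mat a) ^ 2"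
    and "m21 (hj_mat (glue_mid a b)) = m11 (hj_mat a) * m21 (hj_mat a) - 1"
    using glue_first_columns(1,2)[OF mat2_det_hj_mat]
    by (simp_all add: hj_mat_glue_mid[OF ne] hj_mat_dual_pairs[OF assms])
qed (simp add: glue_mid_def)

lemma glue_two_expansion:
  assumes "(a, b) \<in> dual_pairs"
  shows "is_hj_expansion (glue_two a b)
    (of_int (m11 (hj_mat a) ^ 2) / of_int (m11 (hj_mat a) * m21 (hj_mat a) + 1))"
proof (rule is_hj_expansion_first_column)
  show "\<forall>x\<in>set (glue_two a b). x \<ge> 2"
    using dual_pairs_ge_2[OF assms] by (auto simp: glue_two_def)
  show "m11 (hj_mat (glue_two a b)) = m11 (hj_mat a) ^ 2"
    and "m21 (hj_mat (glue_two a b)) = m11 (hj_mat a) * m21 (hj_mat a) + 1"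
    using glue_first_columns(3,4)[OF mat2_det_hj_mat]
    by (simp_all add: hj_mat_glue_two hj_mat_dual_pairs[OF assms])
qed (simp add: glue_two_def)

lemma image_dual_pairs_eq_expansions:
  fixes g :: "int list \<Rightarrow> int list \<Rightarrow> int list" and F :: "int \<Rightarrow> int \<Rightarrow> rat"
  assumes expansion: "\<And>a b. (a, b) \<in> dual_pairs \<Longrightarrow>
    is_hj_expansion (g a b) (F (m11 (hj_mat a)) (m21 (hj_mat a)))"
  shows "(\<lambda>(a, b). g a b) ` dual_pairs =
    {c. \<exists>p q. p > q \<and> q > 0 \<and> coprime p q \<and> is_hj_expansion c (F p q)}"
    (is "?glued = ?expansions")
proof
  show "?glued \<subseteq> ?expansions"
    using expansion dual_pairs_first_column by fastforce
next
  show "?expansions \<subseteq> ?glued"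
  proof clarify
    fix c and p q :: int
    assume "q < p" "0 < q" "coprime p q" and c: "is_hj_expansion c (F p q)"
    then obtain a where a: "a \<noteq> []" "\<forall>x\<in>set a. x \<ge> 2" "m11 (hj_mat a) = p" "m21 (hj_mat a) = q"
      using ex_hj_mat_first_column by blast
    then obtain b where ab: "(a, b) \<in> dual_pairs" using ex_dual_partner by blast
    have "c = g a b"
      using c expansion[OF ab] a hj_inj unfolding is_hj_expansion_def by metis
    then show "c \<in> ?glued" using ab by force
  qed
qed

lemma S2_eq_HJ_minus: "S2 = HJ_minus"
  unfolding S2_def HJ_minus_def
  by (rule image_dual_pairs_eq_expansions) (rule glue_mid_expansion)

lemma T2_eq_HJ_plus: "T2 = HJ_plus"
  unfolding T2_def HJ_plus_def
  by (rule image_dual_pairs_eq_expansions) (rule glue_two_expansion)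

theorem lemma3p3:
  shows "S1 = S2 \<and> S2 = HJ_minus \<and> T1 = T2 \<and> T1 = HJ_plus"
  using S1_eq_S2 S2_eq_HJ_minus T1_eq_T2 T2_eq_HJ_plus by simp

end
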